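(* Let Assumptions 1 and 2 hold and let $x^\star=\arg\min F$. In Algorithm 2, suppose the $b$ indices of $\mathcal{B}_k$ are sampled independently from $\{1,\dots,n\}$ with probabilities $p_i=L_i/(nL_{\mathrm{avg}})$. Then, conditioned on $x_k$, $y_k$ and $\tilde x_s$, the error $\Delta_k=v_k-\nabla f(y_k)$ satisfies $$\mathbb{E}\|\Delta_k\|_{H^{-1}}^2\le\frac{2L_{\mathrm{avg}}^2}{b}\|x_k-y_k\|_H^2+\frac{8L_{\mathrm{avg}}}{b}\big(F(x_k)-F(x^\star)+F(\tilde x_s)-F(x^\star)\big).$$
   Context: Setting. $F(x)=f(x)+h(x)$ on $\mathbb{R}^d$, where $f=\frac1n\sum_{i=1}^n f_i$ with each $f_i:\mathbb{R}^d\to\mathbb{R}$ convex and differentiable, and $h:\mathbb{R}^d\to\mathbb{R}\cup\{+\infty\}$ is proper, convex, lower semicontinuous, with closed domain $\mathrm{dom}\,h$. $H$ is a fixed symmetric positive definite $d\times d$ matrix; $\|x\|_H=\sqrt{x^\top Hx}$, $\|x\|_{H^{-1}}=\sqrt{x^\top H^{-1}x}$, and $\langle x,y\rangle=x^\top y$. Assumption 1: each $f_i$ is $L_i$-smooth w.r.t. the $H$-norm, i.e. $\|\nabla f_i(x)-\nabla f_i(y)\|_{H^{-1}}\le L_i\|x-y\|_H$ for all $x,y$; $L_{\mathrm{avg}}=\frac1n\sum_{i=1}^nL_i$. Assumption 2: $f$ is $\mu$-strongly convex w.r.t. the $H$-norm for some $\mu>0$, i.e. $f(y)\ge f(x)+\langle\nabla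 f(x),y-x\rangle+\frac\mu2\|y-x\|_H^2$ for all $x,y$. In Algorithm 2, at inner step $k$ of outer iteration $s$ the current points are $x_k,y_k\in\mathbb{R}^d$ and the snapshot is $\tilde x_s$; the stochastic gradient is $v_k=\frac1b\sum_{i\in\mathcal B_k}\frac{\nabla f_i(y_k)-\nabla f_i(\tilde x_s)}{np_i}+\nabla f(\tilde x_s)$, where $\mathcal{B}_k$ is a multiset of $b$ sampled indices. *)

theory Defs
  imports "HOL-Analysis.Analysis" "HOL-Library.Extended_Real"
begin

definition Hnorm :: "real^'d^'d \<Rightarrow> real^'d \<Rightarrow> real" where
  "Hnorm H x = sqrt (x \<bullet> (H *v x))"

definition Hinvnorm :: "real^'d^'d \<Rightarrow> real^'d \<Rightarrow> real" where
  "Hinvnorm H x = sqrt (x \<bullet> (matrix_inv H *v x))"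

definition sym_pos_def_mat :: "real^'d^'d \<Rightarrow> bool" where
  "sym_pos_def_mat H \<longleftrightarrow> transpose H = H \<and> (\<forall>x. x \<noteq> 0 \<longrightarrow> x \<bullet> (H *v x) > 0)"

definition proper_fun :: "('a \<Rightarrow> ereal) \<Rightarrow> bool" where
  "proper_fun h \<longleftrightarrow> (\<forall>x. h x \<noteq> -\<infinity>) \<and> (\<exists>x. h x \<noteq> \<infinity>)"

definition convex_ext :: "('a::real_vector \<Rightarrow> ereal) \<Rightarrow> bool" where
  "convex_ext h \<longleftrightarrow> (\<forall>x y u. 0 < u \<and> u < 1 \<longrightarrow>
       h (u *\<^sub>R x + (1 - u) *\<^sub>R y) \<le> ereal u * h x + ereal (1 - u) * h y)"

definition lsc_ext :: "('a::topological_space \<Rightarrow> ereal) \<Rightarrow> bool" where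
  "lsc_ext h \<longleftrightarrow> (\<forall>x X. X \<longlonglongrightarrow> x \<longrightarrow> h x \<le> liminf (\<lambda>k. h (X k)))"

definition edom :: "('a \<Rightarrow> ereal) \<Rightarrow> 'a set" where
  "edom h = {x. h x \<noteq> \<infinity>}"

end

theory Submission
  imports Defs
begin

text \<open>
  Write \<open>D\<^sub>i = \<nabla>f\<^sub>i(y\<^sub>k) - \<nabla>f\<^sub>i(x\<^sub>s)\<close>. The error \<open>\<Delta>\<^sub>k\<close> is the centred mean of \<open>b\<close> independent
  copies of the importance-weighted vector \<open>D\<^sub>i / (n p\<^sub>i)\<close>, so its second moment is \<open>1/b\<close> times
  a variance, which is at most the second moment \<open>(L\<^sub>a\<^sub>v\<^sub>g / n) \<Sum>\<^sub>i \<parallel>D\<^sub>i\<parallel>\<^sup>2 / L\<^sub>i\<close>.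
  Splitting \<open>D\<^sub>i\<close> through \<open>x\<^sub>k\<close> and \<open>x\<^sup>\<star>\<close>, smoothness bounds the first piece by \<open>L\<^sub>i \<parallel>x\<^sub>k - y\<^sub>k\<parallel>\<close>,
  and cocoercivity bounds \<open>\<parallel>\<nabla>f\<^sub>i(x) - \<nabla>f\<^sub>i(x\<^sup>\<star>)\<parallel>\<^sup>2\<close> by \<open>2 L\<^sub>i\<close> times the Bregman divergence of
  \<open>f\<^sub>i\<close> at \<open>x\<^sup>\<star>\<close>. Averaged over \<open>i\<close>, that divergence is at most \<open>F(x) - F(x\<^sup>\<star>)\<close>, because \<open>x\<^sup>\<star>\<close>
  minimises \<open>f + h\<close> with \<open>h\<close> convex.
\<close>

definition bregman :: "('a::real_inner \<Rightarrow> real) \<Rightarrow> ('a \<Rightarrow> 'a) \<Rightarrow> 'a \<Rightarrow> 'a \<Rightarrow> real" where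
  "bregman \<phi> G x y = \<phi> y - \<phi> x - G x \<bullet> (y - x)"

lemma has_real_derivative_along_line:
  assumes "\<And>x. (\<phi> has_derivative (\<lambda>u. G x \<bullet> u)) (at x)"
  shows "((\<lambda>t. \<phi> (x + t *\<^sub>R d)) has_real_derivative (G (x + t *\<^sub>R d) \<bullet> d)) (at t)"
proof -
  have "((\<lambda>t. x + t *\<^sub>R d) has_derivative (\<lambda>t. t *\<^sub>R d)) (at t)"
    by (auto intro!: derivative_eq_intros)
  from has_derivative_compose[OF this assms]
  have "((\<lambda>t. \<phi> (x + t *\<^sub>R d)) has_derivative (\<lambda>s. (G (x + t *\<^sub>R d) \<bullet> d) * s)) (at t)"
    by (simp add: mult.commute)
  then show ?thesis
    unfolding has_field_derivative_def .
qed

lemma bregman_nonneg: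
  assumes deriv: "\<And>x. (\<phi> has_derivative (\<lambda>u. G x \<bullet> u)) (at x)"
    and conv: "convex_on UNIV \<phi>"
  shows "0 \<le> bregman \<phi> G x y"
proof -
  define \<gamma> where "\<gamma> = (\<lambda>t::real. \<phi> (x + t *\<^sub>R (y - x)))"
  have "convex_on UNIV \<gamma>"
    unfolding convex_on_def
  proof (intro conjI ballI allI impI)
    fix t1 t2 u v :: real
    assume uv: "0 \<le> u" "0 \<le> v" "u + v = 1"
    then have "x + (u *\<^sub>R t1 + v *\<^sub>R t2) *\<^sub>R (y - x)
        = u *\<^sub>R (x + t1 *\<^sub>R (y - x)) + v *\<^sub>R (x + t2 *\<^sub>R (y - x))"
      by (simp add: algebra_simps flip: scaleR_add_left)
    then show "\<gamma> (u *\<^sub>R t1 + v *\<^sub>R t2) \<le> u * \<gamma> t1 + v * \<gamma> t2"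
      unfolding \<gamma>_def using conv uv unfolding convex_on_def by auto
  qed simp
  moreover have "(\<gamma> has_field_derivative (G x \<bullet> (y - x))) (at 0 within UNIV)"
    unfolding \<gamma>_def using has_real_derivative_along_line[OF deriv, of x "y - x" 0] by simp
  ultimately have "\<gamma> 1 - \<gamma> 0 \<ge> (G x \<bullet> (y - x)) * (1 - 0)"
    by (intro convex_on_imp_above_tangent) auto
  then show ?thesis
    unfolding \<gamma>_def bregman_def by simp
qed

lemma bregman_three_point:
  "bregman \<phi> G x w = bregman \<phi> G x y + bregman \<phi> G y w + (G y - G x) \<bullet> (w - y)"
  unfolding bregman_def by (simp add: algebra_simps inner_diff_left inner_diff_right)

lemma bregman_average:
  fixes f :: "'i::finite \<Rightarrow> 'a::real_inner \<Rightarrow> real"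
  shows "bregman (\<lambda>x. (\<Sum>i\<in>UNIV. f i x) / n) (\<lambda>x. (1 / n) *\<^sub>R (\<Sum>i\<in>UNIV. g i x)) z w
    = (\<Sum>i\<in>UNIV. bregman (f i) (g i) z w) / n"
  unfolding bregman_def
  by (simp add: inner_sum_left sum_subtractf diff_divide_distrib sum_divide_distrib)

lemma nonneg_if_nonneg_add_small_multiples:
  fixes a C :: real
  assumes "\<And>t. 0 < t \<Longrightarrow> t < 1 \<Longrightarrow> 0 \<le> a + C * t"
  shows "0 \<le> a"
proof (rule tendsto_lowerbound)
  show "((\<lambda>t. a + C * t) \<longlongrightarrow> a) (at_right 0)"
    by (auto intro!: tendsto_eq_intros)
  show "\<forall>\<^sub>F t in at_right 0. 0 \<le> a + C * t"
    using assms by (auto simp: eventually_at_right_field intro!: exI[of _ 1])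
qed simp

lemma expectation_coordinate:
  fixes p :: "'i::finite \<Rightarrow> real" and A :: "'a set"
  assumes "finite A" "j \<in> A" "sum p UNIV = 1"
  shows "(\<Sum>I\<in>PiE A (\<lambda>_. UNIV). (\<Prod>l\<in>A. p (I l)) * \<psi> (I j)) = (\<Sum>u\<in>UNIV. p u * \<psi> u)"
proof -
  define q where "q = (\<lambda>l u. p u * (if l = j then \<psi> u else 1))"
  have "(\<Prod>l\<in>A. p (I l)) * \<psi> (I j) = (\<Prod>l\<in>A. q l (I l))" for I :: "'a \<Rightarrow> 'i"
    using assms by (simp add: q_def prod.distrib)
  moreover have "(\<Sum>u\<in>UNIV. q l u) = (if l = j then \<Sum>u\<in>UNIV. p u * \<psi> u else 1)" for l
    using assms by (simp add: q_def)
  moreover have "(\<Sum>I\<in>PiE A (\<lambda>_. UNIV). \<Prod>l\<in>A. q l (I l)) = (\<Prod>l\<in>A. \<Sum>u\<in>UNIV. q l u)"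
    using assms by (simp add: prod_sum_PiE)
  ultimately show ?thesis
    using assms by simp
qed

lemma expectation_two_coordinates:
  fixes p :: "'i::finite \<Rightarrow> real" and A :: "'a set"
  assumes "finite A" "j \<in> A" "k \<in> A" "j \<noteq> k" "sum p UNIV = 1"
  shows "(\<Sum>I\<in>PiE A (\<lambda>_. UNIV). (\<Prod>l\<in>A. p (I l)) * (\<psi> (I j) * \<theta> (I k)))
    = (\<Sum>u\<in>UNIV. p u * \<psi> u) * (\<Sum>u\<in>UNIV. p u * \<theta> u)"
proof -
  define q where "q = (\<lambda>l u. p u * (if l = j then \<psi> u else 1) * (if l = k then \<theta> u else 1))"
  have "(\<Prod>l\<in>A. p (I l)) * (\<psi> (I j) * \<theta> (I k)) = (\<Prod>l\<in>A. q l (I l))" for I :: "'a \<Rightarrow> 'i"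
    using assms by (simp add: q_def prod.distrib)
  moreover have "(\<Sum>u\<in>UNIV. q l u) = (if l = j then \<Sum>u\<in>UNIV. p u * \<psi> u else 1)
      * (if l = k then \<Sum>u\<in>UNIV. p u * \<theta> u else 1)" for l
    using assms by (simp add: q_def)
  moreover have "(\<Sum>I\<in>PiE A (\<lambda>_. UNIV). \<Prod>l\<in>A. q l (I l)) = (\<Prod>l\<in>A. \<Sum>u\<in>UNIV. q l u)"
    using assms by (simp add: prod_sum_PiE)
  ultimately show ?thesis
    using assms by (simp add: prod.distrib)
qed

lemma matrix_vector_mult_sum: "M *v (\<Sum>j\<in>S. z j) = (\<Sum>j\<in>S. M *v z j)"
  for M :: "real^'n^'m"
  using linear_sum[OF matrix_vector_mul_linear] .

lemma expectation_quadratic_form_sum: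
  fixes p :: "'i::finite \<Rightarrow> real" and Z :: "'i \<Rightarrow> real^'n" and M :: "real^'n^'n"
  assumes p1: "sum p UNIV = 1" and centered: "(\<Sum>u\<in>UNIV. p u *\<^sub>R Z u) = 0"
  shows "(\<Sum>I\<in>PiE {..<b} (\<lambda>_. UNIV). (\<Prod>j<b. p (I j)) * ((\<Sum>j<b. Z (I j)) \<bullet> (M *v (\<Sum>j<b. Z (I j)))))
    = real b * (\<Sum>u\<in>UNIV. p u * (Z u \<bullet> (M *v Z u)))"
proof -
  define E where "E = (\<lambda>\<psi>. \<Sum>I\<in>PiE {..<b} (\<lambda>_. UNIV). (\<Prod>j<b. p (I j)) * \<psi> I)"
  have E_sum: "E (\<lambda>I. \<Sum>x\<in>S. \<psi> x I) = (\<Sum>x\<in>S. E (\<psi> x))" for S :: "'a set" and \<psi>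
    unfolding E_def by (simp add: sum_distrib_left sum.swap[of _ "PiE _ _"])
  have pair: "E (\<lambda>I. Z (I j) \<bullet> (M *v Z (I k))) = (if j = k then \<Sum>u\<in>UNIV. p u * (Z u \<bullet> (M *v Z u)) else 0)"
    if "j < b" "k < b" for j k
  proof (cases "j = k")
    case True
    then show ?thesis
      using expectation_coordinate[OF _ _ p1, of "{..<b}" j] that unfolding E_def by simp
  next
    case False
    \<comment> \<open>coordinatewise, the two factors are independent and the first one is centered\<close>
    have "E (\<lambda>I. Z (I j) \<bullet> (M *v Z (I k)))
        = (\<Sum>c\<in>UNIV. E (\<lambda>I. Z (I j) $ c * (M *v Z (I k)) $ c))"
      unfolding inner_vec_def inner_real_def by (rule E_sum)
    also have "\<dots> = (\<Sum>c\<in>UNIV. (\<Sum>u\<in>UNIV. p u * Z u $ c) * (\<Sum>u\<in>UNIV. p u * (M *v Z u) $ c))"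
      unfolding E_def using that
      by (intro sum.cong refl expectation_two_coordinates[OF _ _ _ False p1,
            where \<psi> = "\<lambda>u. Z u $ _" and \<theta> = "\<lambda>u. (M *v Z u) $ _"]) auto
    also have "\<dots> = 0"
      using arg_cong[OF centered, of "\<lambda>v. v $ _"] by simp
    finally show ?thesis
      using False by simp
  qed
  have "(\<Sum>j<b. Z (I j)) \<bullet> (M *v (\<Sum>j<b. Z (I j))) = (\<Sum>j<b. \<Sum>k<b. Z (I j) \<bullet> (M *v Z (I k)))"
    for I :: "nat \<Rightarrow> 'i"
    by (simp add: matrix_vector_mult_sum inner_sum_left inner_sum_right) (rule sum.swap)
  then have "E (\<lambda>I. (\<Sum>j<b. Z (I j)) \<bullet> (M *v (\<Sum>j<b. Z (I j))))
      = (\<Sum>j<b. \<Sum>k<b. E (\<lambda>I. Z (I j) \<bullet> (M *v Z (I k))))"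
    by (simp add: E_sum)
  also have "\<dots> = real b * (\<Sum>u\<in>UNIV. p u * (Z u \<bullet> (M *v Z u)))"
    by (simp add: pair)
  finally show ?thesis
    unfolding E_def .
qed

lemma ereal_le_add_mult_add:
  assumes "X \<le> d + c * (a + a')" "0 \<le> c" "ereal a \<le> A" "ereal a' \<le> A'"
  shows "ereal X \<le> ereal d + ereal c * (A + A')"
proof -
  have "ereal c * ereal (a + a') \<le> ereal c * (A + A')"
    using assms(2-4) by (intro ereal_mult_left_mono) (auto simp flip: plus_ereal.simps(1) intro: add_mono)
  then show ?thesis
    using assms(1) by (metis add_left_mono ereal_less_eq(3) order_trans plus_ereal.simps(1)
        times_ereal.simps(1))
qed

context
  fixes H :: "real^'d^'d"
  assumes H: "sym_pos_def_mat H"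
begin

lemma sym_pos_def_mat_invertible: "invertible H"
proof -
  have "\<forall>x. H *v x = 0 \<longrightarrow> x = 0"
    using H unfolding sym_pos_def_mat_def by (metis inner_zero_right less_irrefl)
  then show ?thesis
    using matrix_left_invertible_ker invertible_left_inverse by blast
qed

lemma mult_matrix_inv_cancel: "H *v (matrix_inv H *v x) = x"
proof -
  have "H ** matrix_inv H = mat 1"
    using someI_ex[OF sym_pos_def_mat_invertible[unfolded invertible_def]]
    unfolding matrix_inv_def by blast
  then show ?thesis
    by (simp add: matrix_vector_mul_assoc)
qed

lemma inner_mult_sym: "a \<bullet> (H *v c) = (H *v a) \<bullet> c"
  using H unfolding sym_pos_def_mat_def by (metis vector_transpose_matrix dot_lmul_matrix)

lemma inner_mult_inv_sym: "a \<bullet> (matrix_inv H *v c) = (matrix_inv H *v a) \<bullet> c"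
  by (metis mult_matrix_inv_cancel inner_mult_sym)

lemma inner_mult_nonneg: "0 \<le> x \<bullet> (H *v x)"
  using H unfolding sym_pos_def_mat_def by (cases "x = 0") (auto intro: less_imp_le)

lemma inner_mult_inv_eq: "a \<bullet> (matrix_inv H *v a) = (matrix_inv H *v a) \<bullet> (H *v (matrix_inv H *v a))"
  by (simp add: mult_matrix_inv_cancel inner_commute)

lemma inner_mult_inv_nonneg: "0 \<le> a \<bullet> (matrix_inv H *v a)"
  using inner_mult_inv_eq inner_mult_nonneg by simp

lemma Hnorm_sq: "(Hnorm H x)\<^sup>2 = x \<bullet> (H *v x)"
  unfolding Hnorm_def using inner_mult_nonneg by simp

lemma Hinvnorm_sq: "(Hinvnorm H x)\<^sup>2 = x \<bullet> (matrix_inv H *v x)"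
  unfolding Hinvnorm_def using inner_mult_inv_nonneg by simp

lemma Hnorm_nonneg: "0 \<le> Hnorm H x"
  unfolding Hnorm_def using inner_mult_nonneg by simp

lemma Hinvnorm_nonneg: "0 \<le> Hinvnorm H x"
  unfolding Hinvnorm_def using inner_mult_inv_nonneg by simp

lemma Hnorm_pos: "x \<noteq> 0 \<Longrightarrow> 0 < Hnorm H x"
  using H unfolding Hnorm_def sym_pos_def_mat_def by simp

lemma Hinvnorm_eq_0_iff: "Hinvnorm H a = 0 \<longleftrightarrow> a = 0"
proof
  assume "Hinvnorm H a = 0"
  then have "matrix_inv H *v a = 0"
    using H inner_mult_inv_eq unfolding Hinvnorm_def sym_pos_def_mat_def
    by (metis less_irrefl real_sqrt_eq_zero_cancel_iff)
  then show "a = 0"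
    by (metis mult_matrix_inv_cancel matrix_vector_mult_0_right)
qed (simp add: Hinvnorm_def)

lemma Hnorm_scaleR: "Hnorm H (c *\<^sub>R x) = \<bar>c\<bar> * Hnorm H x"
  unfolding Hnorm_def by (simp add: matrix_vector_mult_scaleR real_sqrt_mult mult.assoc)

lemma Hinvnorm_scaleR: "Hinvnorm H (c *\<^sub>R x) = \<bar>c\<bar> * Hinvnorm H x"
  unfolding Hinvnorm_def by (simp add: matrix_vector_mult_scaleR real_sqrt_mult mult.assoc)

lemma Hnorm_minus_commute: "Hnorm H (x - y) = Hnorm H (y - x)"
  using Hnorm_scaleR[of "-1" "x - y"] by simp

lemma Hinvnorm_minus_commute: "Hinvnorm H (x - y) = Hinvnorm H (y - x)"
  using Hinvnorm_scaleR[of "-1" "x - y"] by simp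

lemma inner_le_Hinvnorm_mult_Hnorm: "a \<bullet> x \<le> Hinvnorm H a * Hnorm H x"
proof (cases "a = 0 \<or> x = 0")
  case True
  then show ?thesis
    using Hinvnorm_nonneg Hnorm_nonneg by auto
next
  case False
  define w where "w = matrix_inv H *v a"
  define \<alpha> where "\<alpha> = Hinvnorm H a"
  define \<beta> where "\<beta> = Hnorm H x"
  have pos: "0 < \<alpha> * \<beta>"
    using False Hnorm_pos Hinvnorm_nonneg Hinvnorm_eq_0_iff unfolding \<alpha>_def \<beta>_def
    by (metis mult_pos_pos order_le_less)
  have Hw: "H *v w = a"
    unfolding w_def by (rule mult_matrix_inv_cancel)
  have xHw: "w \<bullet> (H *v x) = a \<bullet> x"
    using inner_mult_sym[of w x] Hw by (simp add: inner_commute)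
  have "0 \<le> (\<alpha> *\<^sub>R x - \<beta> *\<^sub>R w) \<bullet> (H *v (\<alpha> *\<^sub>R x - \<beta> *\<^sub>R w))"
    by (rule inner_mult_nonneg)
  also have "\<dots> = \<alpha>\<^sup>2 * (x \<bullet> (H *v x)) - 2 * \<alpha> * \<beta> * (a \<bullet> x) + \<beta>\<^sup>2 * (w \<bullet> a)"
    using xHw Hw
    by (simp add: matrix_vector_mult_scaleR matrix_vector_mult_diff_distrib inner_diff_left
        inner_diff_right inner_commute algebra_simps power2_eq_square)
  also have "\<dots> = 2 * (\<alpha> * \<beta>) * (\<alpha> * \<beta> - a \<bullet> x)"
    using Hnorm_sq[of x] Hinvnorm_sq[of a] unfolding \<alpha>_def \<beta>_def w_def
    by (simp add: inner_commute algebra_simps power2_eq_square)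
  finally show ?thesis
    using pos unfolding \<alpha>_def \<beta>_def by (simp add: zero_le_mult_iff)
qed

lemma Hinvnorm_add_sq_le: "(Hinvnorm H (a + c))\<^sup>2 \<le> 2 * (Hinvnorm H a)\<^sup>2 + 2 * (Hinvnorm H c)\<^sup>2"
proof -
  have "0 \<le> (Hinvnorm H (a - c))\<^sup>2"
    by simp
  moreover have "c \<bullet> (matrix_inv H *v a) = a \<bullet> (matrix_inv H *v c)"
    using inner_mult_inv_sym[of c a] by (simp add: inner_commute)
  ultimately show ?thesis
    unfolding Hinvnorm_sq
    by (simp add: algebra_simps inner_diff_left inner_diff_right inner_add_left inner_add_right)
qed

lemma bregman_le_Hnorm_sq:
  fixes \<phi> :: "real^'d \<Rightarrow> real"
  assumes deriv: "\<And>x. (\<phi> has_derivative (\<lambda>u. G x \<bullet> u)) (at x)"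
    and smooth: "\<And>x y. Hinvnorm H (G x - G y) \<le> L * Hnorm H (x - y)"
  shows "bregman \<phi> G y w \<le> L / 2 * (Hnorm H (w - y))\<^sup>2"
proof -
  define d where "d = w - y"
  define Q where "Q = (Hnorm H d)\<^sup>2"
  define \<gamma> where "\<gamma> = (\<lambda>t::real. \<phi> (y + t *\<^sub>R d) - t * (G y \<bullet> d) - t\<^sup>2 * (L / 2 * Q))"
  have \<gamma>': "(\<gamma> has_real_derivative ((G (y + t *\<^sub>R d) - G y) \<bullet> d - L * t * Q)) (at t)" for t
    unfolding \<gamma>_def
    by (rule derivative_eq_intros has_real_derivative_along_line[OF deriv] refl)+
      (simp add: inner_diff_left algebra_simps)
  have "(G (y + t *\<^sub>R d) - G y) \<bullet> d \<le> L * t * Q" if "0 \<le> t" for t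
  proof -
    have "(G (y + t *\<^sub>R d) - G y) \<bullet> d \<le> Hinvnorm H (G (y + t *\<^sub>R d) - G y) * Hnorm H d"
      by (rule inner_le_Hinvnorm_mult_Hnorm)
    also have "\<dots> \<le> L * Hnorm H (t *\<^sub>R d) * Hnorm H d"
      using smooth[of "y + t *\<^sub>R d" y] by (intro mult_right_mono Hnorm_nonneg) auto
    also have "\<dots> = L * t * Q"
      unfolding Q_def Hnorm_scaleR using that by (simp add: power2_eq_square)
    finally show ?thesis .
  qed
  with \<gamma>' have "\<gamma> 1 \<le> \<gamma> 0"
    by (intro DERIV_nonpos_imp_nonincreasing[of 0 1]) (auto intro!: exI)
  then show ?thesis
    unfolding \<gamma>_def bregman_def d_def Q_def by simp
qed

lemma smoothness_const_nonneg:
  assumes "\<And>x y. Hinvnorm H (G x - G y) \<le> L * Hnorm H (x - y)"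
  shows "0 \<le> L"
proof -
  define e :: "real^'d" where "e = axis undefined 1"
  have "0 < Hnorm H e"
    by (rule Hnorm_pos) (simp add: e_def axis_eq_0_iff)
  moreover have "0 \<le> L * Hnorm H e"
    using assms[of e 0] Hinvnorm_nonneg[of "G e - G 0"] by simp
  ultimately show ?thesis
    by (simp add: zero_le_mult_iff)
qed

lemma Hinvnorm_sq_le_bregman:
  fixes \<phi> :: "real^'d \<Rightarrow> real"
  assumes deriv: "\<And>x. (\<phi> has_derivative (\<lambda>u. G x \<bullet> u)) (at x)"
    and conv: "convex_on UNIV \<phi>"
    and smooth: "\<And>x y. Hinvnorm H (G x - G y) \<le> L * Hnorm H (x - y)"
    and L: "0 < L"
  shows "(Hinvnorm H (G y - G x))\<^sup>2 \<le> 2 * L * bregman \<phi> G x y"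
proof -
  define e where "e = G y - G x"
  define E where "E = (Hinvnorm H e)\<^sup>2"
  define w where "w = y - (1 / L) *\<^sub>R (matrix_inv H *v e)"
  \<comment> \<open>the gradient step from \<open>y\<close> against \<open>e\<close>: descent at \<open>y\<close> and convexity at \<open>x\<close> are compared at \<open>w\<close>\<close>
  have "w - y = (- (1 / L)) *\<^sub>R (matrix_inv H *v e)"
    unfolding w_def by simp
  then have Hw: "H *v (w - y) = (- (1 / L)) *\<^sub>R e"
    by (simp only: matrix_vector_mult_scaleR mult_matrix_inv_cancel)
  have "(Hnorm H (w - y))\<^sup>2 = (1 / L)\<^sup>2 * E"
    unfolding Hnorm_sq E_def Hinvnorm_sq Hw
    by (simp add: w_def inner_commute power2_eq_square)
  then have "bregman \<phi> G y w \<le> L / 2 * ((1 / L)\<^sup>2 * E)"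
    using bregman_le_Hnorm_sq[OF deriv smooth, of y w] by simp
  moreover have "e \<bullet> (w - y) = - (1 / L) * E"
    unfolding E_def Hinvnorm_sq w_def by simp
  moreover have "0 \<le> bregman \<phi> G x w"
    by (rule bregman_nonneg[OF deriv conv])
  ultimately have "0 \<le> bregman \<phi> G x y + L / 2 * ((1 / L)\<^sup>2 * E) - (1 / L) * E"
    using bregman_three_point[of \<phi> G x w y]
    unfolding e_def by linarith
  then show ?thesis
    using L unfolding E_def e_def by (simp add: field_simps power2_eq_square)
qed

lemma Hinvnorm_sq_gradient_diff_le:
  fixes \<phi> :: "real^'d \<Rightarrow> real"
  assumes deriv: "\<And>x. (\<phi> has_derivative (\<lambda>u. G x \<bullet> u)) (at x)"
    and conv: "convex_on UNIV \<phi>"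
    and smooth: "\<And>x y. Hinvnorm H (G x - G y) \<le> L * Hnorm H (x - y)"
    and L: "0 < L"
  shows "(Hinvnorm H (G y - G s))\<^sup>2
    \<le> 2 * L\<^sup>2 * (Hnorm H (x - y))\<^sup>2 + 8 * L * (bregman \<phi> G z x + bregman \<phi> G z s)"
proof -
  have "Hinvnorm H (G y - G x) \<le> L * Hnorm H (x - y)"
    using smooth[of y x] Hnorm_minus_commute[of x y] by simp
  then have "(Hinvnorm H (G y - G x))\<^sup>2 \<le> L\<^sup>2 * (Hnorm H (x - y))\<^sup>2"
    using Hinvnorm_nonneg by (metis power_mono power_mult_distrib)
  moreover have "(Hinvnorm H (G x - G s))\<^sup>2
      \<le> 2 * (Hinvnorm H (G x - G z))\<^sup>2 + 2 * (Hinvnorm H (G s - G z))\<^sup>2"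
    using Hinvnorm_add_sq_le[of "G x - G z" "G z - G s"]
    by (simp add: Hinvnorm_minus_commute[of "G z"])
  moreover have "(Hinvnorm H (G y - G s))\<^sup>2
      \<le> 2 * (Hinvnorm H (G y - G x))\<^sup>2 + 2 * (Hinvnorm H (G x - G s))\<^sup>2"
    using Hinvnorm_add_sq_le[of "G y - G x" "G x - G s"] by simp
  ultimately show ?thesis
    using Hinvnorm_sq_le_bregman[OF deriv conv smooth L, where x = z and y = x]
      Hinvnorm_sq_le_bregman[OF deriv conv smooth L, where x = z and y = s]
    by (simp add: algebra_simps)
qed

lemma bregman_le_objective_gap:
  fixes \<phi> :: "real^'d \<Rightarrow> real" and h :: "real^'d \<Rightarrow> ereal"
  assumes quad: "\<And>w. bregman \<phi> G x w \<le> C * (Hnorm H (w - x))\<^sup>2"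
    and hproper: "proper_fun h"
    and hconv: "convex_ext h"
    and min: "\<And>w. ereal (\<phi> x) + h x \<le> ereal (\<phi> w) + h w"
  shows "ereal (bregman \<phi> G x z) \<le> (ereal (\<phi> z) + h z) - (ereal (\<phi> x) + h x)"
proof -
  have hfin: "h w \<noteq> -\<infinity>" for w
    using hproper unfolding proper_fun_def by blast
  obtain x0 where "h x0 \<noteq> \<infinity>"
    using hproper unfolding proper_fun_def by blast
  then have "ereal (\<phi> x) + h x < \<infinity>"
    using min[of x0] hfin[of x0] by (cases "h x0") auto
  then obtain c where c: "h x = ereal c"
    using hfin[of x] by (cases "h x") auto
  show ?thesis
  proof (cases "h z")
    case (real hz)
    define d where "d = z - x"
    define a where "a = G x \<bullet> d + hz - c"
    have "0 \<le> a + (C * (Hnorm H d)\<^sup>2) * t" if t: "0 < t" "t < 1" for t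
    proof -
      define w where "w = x + t *\<^sub>R d"
      have "w = t *\<^sub>R z + (1 - t) *\<^sub>R x"
        unfolding w_def d_def by (simp add: algebra_simps)
      moreover have "h (t *\<^sub>R z + (1 - t) *\<^sub>R x) \<le> ereal t * h z + ereal (1 - t) * h x"
        using hconv t unfolding convex_ext_def by blast
      ultimately have "h w \<le> ereal (t * hz + (1 - t) * c)"
        unfolding c real by simp
      then have "ereal (\<phi> x + c) \<le> ereal (\<phi> w + (t * hz + (1 - t) * c))"
        using min[of w] c by (metis add_left_mono order_trans plus_ereal.simps(1))
      moreover have "bregman \<phi> G x w \<le> C * t\<^sup>2 * (Hnorm H d)\<^sup>2"
        using quad[of w] t unfolding w_def by (simp add: Hnorm_scaleR power_mult_distrib)
      ultimately have "0 \<le> t * (a + C * (Hnorm H d)\<^sup>2 * t)"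
        unfolding bregman_def a_def w_def by (simp add: algebra_simps power2_eq_square)
      then show ?thesis
        using t by (simp add: zero_le_mult_iff)
    qed
    then have "0 \<le> a"
      by (rule nonneg_if_nonneg_add_small_multiples)
    then show ?thesis
      unfolding c real bregman_def a_def d_def by simp
  qed (use c hfin in auto)
qed

lemma sum_Hinvnorm_sq_centered:
  fixes p :: "'i::finite \<Rightarrow> real" and X :: "'i \<Rightarrow> real^'d"
  assumes p1: "sum p UNIV = 1"
  defines "m \<equiv> \<Sum>u\<in>UNIV. p u *\<^sub>R X u"
  shows "(\<Sum>u\<in>UNIV. p u * (Hinvnorm H (X u - m))\<^sup>2)
    = (\<Sum>u\<in>UNIV. p u * (Hinvnorm H (X u))\<^sup>2) - (Hinvnorm H m)\<^sup>2"
proof -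
  define M where "M = matrix_inv H"
  have expand: "(Hinvnorm H (X u - m))\<^sup>2 = (Hinvnorm H (X u))\<^sup>2 - 2 * (X u \<bullet> (M *v m)) + (Hinvnorm H m)\<^sup>2"
    for u
    using inner_mult_inv_sym[of m "X u"]
    unfolding Hinvnorm_sq M_def
    by (simp add: inner_diff_left inner_diff_right matrix_vector_mult_diff_distrib inner_commute)
  have cross: "(\<Sum>u\<in>UNIV. p u * (X u \<bullet> (M *v m))) = (Hinvnorm H m)\<^sup>2"
    unfolding Hinvnorm_sq M_def m_def by (simp add: inner_sum_left)
  have "(\<Sum>u\<in>UNIV. p u * (Hinvnorm H (X u - m))\<^sup>2)
      = (\<Sum>u\<in>UNIV. p u * (Hinvnorm H (X u))\<^sup>2) - 2 * (\<Sum>u\<in>UNIV. p u * (X u \<bullet> (M *v m)))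
        + (\<Sum>u\<in>UNIV. p u) * (Hinvnorm H m)\<^sup>2"
    unfolding expand
    by (simp add: algebra_simps sum.distrib sum_subtractf sum_distrib_left sum_distrib_right)
  then show ?thesis
    unfolding cross p1 by simp
qed

lemma expectation_Hinvnorm_sq_sample_mean_le:
  fixes p :: "'i::finite \<Rightarrow> real" and X :: "'i \<Rightarrow> real^'d"
  assumes p1: "sum p UNIV = 1" and b: "0 < b"
  defines "m \<equiv> \<Sum>u\<in>UNIV. p u *\<^sub>R X u"
  shows "(\<Sum>I\<in>PiE {..<b} (\<lambda>_. UNIV).
      (\<Prod>j<b. p (I j)) * (Hinvnorm H ((1 / real b) *\<^sub>R (\<Sum>j<b. X (I j)) - m))\<^sup>2)
    \<le> (\<Sum>u\<in>UNIV. p u * (Hinvnorm H (X u))\<^sup>2) / real b"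
proof -
  define Z where "Z = (\<lambda>u. X u - m)"
  have "(\<Sum>u\<in>UNIV. p u *\<^sub>R Z u) = 0"
    using p1 unfolding Z_def m_def
    by (simp add: scaleR_diff_right sum_subtractf flip: scaleR_sum_left)
  note second_moment = expectation_quadratic_form_sum[OF p1 this, of b "matrix_inv H"]
  have "(1 / real b) *\<^sub>R (\<Sum>j<b. X (I j)) - m = (1 / real b) *\<^sub>R (\<Sum>j<b. Z (I j))" for I
    using b unfolding Z_def
    by (simp add: sum_subtractf scaleR_diff_right sum_constant_scaleR del: sum_constant)
  then have "(\<Sum>I\<in>PiE {..<b} (\<lambda>_. UNIV).
      (\<Prod>j<b. p (I j)) * (Hinvnorm H ((1 / real b) *\<^sub>R (\<Sum>j<b. X (I j)) - m))\<^sup>2)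
    = (1 / real b)\<^sup>2 * (\<Sum>I\<in>PiE {..<b} (\<lambda>_. UNIV).
      (\<Prod>j<b. p (I j)) * ((\<Sum>j<b. Z (I j)) \<bullet> (matrix_inv H *v (\<Sum>j<b. Z (I j)))))"
    by (simp add: Hinvnorm_scaleR power_mult_distrib Hinvnorm_sq sum_distrib_left
        power_divide ac_simps)
  also have "\<dots> = (\<Sum>u\<in>UNIV. p u * (Hinvnorm H (Z u))\<^sup>2) / real b"
    using b unfolding second_moment Hinvnorm_sq by (simp add: power2_eq_square)
  also have "\<dots> \<le> (\<Sum>u\<in>UNIV. p u * (Hinvnorm H (X u))\<^sup>2) / real b"
    using sum_Hinvnorm_sq_centered[OF p1, of X] b unfolding Z_def m_def
    by (simp add: divide_right_mono)
  finally show ?thesis .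
qed

lemma expectation_Hinvnorm_sq_importance_sampling_le:
  fixes p :: "'i::finite \<Rightarrow> real" and D :: "'i \<Rightarrow> real^'d" and N :: real
  assumes p1: "sum p UNIV = 1" and b: "0 < b"
    and support: "\<And>u. p u = 0 \<Longrightarrow> D u = 0"
  shows "(\<Sum>I\<in>PiE {..<b} (\<lambda>_. UNIV). (\<Prod>j<b. p (I j))
      * (Hinvnorm H ((1 / real b) *\<^sub>R (\<Sum>j<b. (1 / (N * p (I j))) *\<^sub>R D (I j))
          - (1 / N) *\<^sub>R (\<Sum>u\<in>UNIV. D u)))\<^sup>2)
    \<le> (\<Sum>u\<in>UNIV. (Hinvnorm H (D u))\<^sup>2 / p u) / (real b * N\<^sup>2)"
proof -
  define X where "X = (\<lambda>u. (1 / (N * p u)) *\<^sub>R D u)"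
  have "p u *\<^sub>R X u = (1 / N) *\<^sub>R D u" for u
    using support[of u] unfolding X_def by (cases "p u = 0") auto
  then have mean: "(\<Sum>u\<in>UNIV. p u *\<^sub>R X u) = (1 / N) *\<^sub>R (\<Sum>u\<in>UNIV. D u)"
    by (simp add: scaleR_sum_right)
  \<comment> \<open>for \<open>p u = 0\<close> both sides are \<open>0\<close>, the right one because \<open>x / 0 = 0\<close>\<close>
  have "p u * (Hinvnorm H (X u))\<^sup>2 = (Hinvnorm H (D u))\<^sup>2 / p u / N\<^sup>2" for u
    using support[of u] unfolding X_def
    by (cases "p u = 0") (auto simp: Hinvnorm_scaleR power2_eq_square field_simps)
  then have second_moment: "(\<Sum>u\<in>UNIV. p u * (Hinvnorm H (X u))\<^sup>2) / real b
      = (\<Sum>u\<in>UNIV. (Hinvnorm H (D u))\<^sup>2 / p u) / (real b * N\<^sup>2)"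
    by (simp add: sum_divide_distrib ac_simps)
  from expectation_Hinvnorm_sq_sample_mean_le[OF p1 b, of X]
  show ?thesis
    unfolding mean second_moment unfolding X_def .
qed

lemma expectation_Hinvnorm_sq_variance_reduced_error_le:
  fixes f :: "'i::finite \<Rightarrow> real^'d \<Rightarrow> real" and g :: "'i \<Rightarrow> real^'d \<Rightarrow> real^'d"
  assumes deriv: "\<And>i x. (f i has_derivative (\<lambda>u. g i x \<bullet> u)) (at x)"
    and conv: "\<And>i. convex_on UNIV (f i)"
    and smooth: "\<And>i x y. Hinvnorm H (g i x - g i y) \<le> L i * Hnorm H (x - y)"
    and b: "0 < b"
  defines "n \<equiv> real CARD('i)"
  defines "Lavg \<equiv> (\<Sum>i\<in>UNIV. L i) / n"
  defines "p \<equiv> (\<lambda>i. L i / (n * Lavg))"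
  shows "(\<Sum>I\<in>PiE {..<b} (\<lambda>_. UNIV). (\<Prod>j<b. p (I j))
      * (Hinvnorm H ((1 / real b) *\<^sub>R (\<Sum>j<b. (1 / (n * p (I j))) *\<^sub>R (g (I j) y - g (I j) s))
          - (1 / n) *\<^sub>R (\<Sum>i\<in>UNIV. g i y - g i s)))\<^sup>2)
    \<le> 2 * Lavg\<^sup>2 / real b * (Hnorm H (x - y))\<^sup>2
      + 8 * Lavg / real b * ((\<Sum>i\<in>UNIV. bregman (f i) (g i) z x) / n
                           + (\<Sum>i\<in>UNIV. bregman (f i) (g i) z s) / n)"
    (is "?lhs \<le> ?rhs")
proof -
  define D where "D = (\<lambda>i. g i y - g i s)"
  define B where "B = (\<lambda>i. 2 * L i * (Hnorm H (x - y))\<^sup>2 + 8 * (bregman (f i) (g i) z x + bregman (f i) (g i) z s))"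
  have n: "0 < n"
    unfolding n_def by simp
  have L0: "0 \<le> L i" for i
    by (rule smoothness_const_nonneg[OF smooth])
  have B0: "0 \<le> B i" for i
    unfolding B_def using L0[of i] bregman_nonneg[OF deriv conv] by simp
  show ?thesis
  proof (cases "Lavg = 0")
    case True
    then have "p = (\<lambda>_. 0)"
      unfolding p_def by simp
    then show ?thesis
      using b True by (simp add: power_0_left)
  next
    case False
    then have Lavg: "0 < Lavg"
      using L0 n sum_nonneg[of UNIV L] unfolding Lavg_def by simp
    have p1: "sum p UNIV = 1"
      using Lavg n unfolding p_def Lavg_def by (auto simp flip: sum_divide_distrib)
    have "D i = 0" if "p i = 0" for i
    proof -
      have "L i = 0"
        using that Lavg n unfolding p_def by simp
      then have "Hinvnorm H (D i) = 0"
        using smooth[of i y s] Hinvnorm_nonneg[of "D i"] unfolding D_def by simp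
      then show ?thesis
        by (simp add: Hinvnorm_eq_0_iff)
    qed
    from expectation_Hinvnorm_sq_importance_sampling_le[OF p1 b this, where N = n]
    have "?lhs \<le> (\<Sum>i\<in>UNIV. (Hinvnorm H (D i))\<^sup>2 / p i) / (real b * n\<^sup>2)"
      unfolding D_def .
    also have "\<dots> \<le> (\<Sum>i\<in>UNIV. n * Lavg * B i) / (real b * n\<^sup>2)"
    proof (intro divide_right_mono sum_mono)
      fix i
      show "(Hinvnorm H (D i))\<^sup>2 / p i \<le> n * Lavg * B i"
      proof (cases "L i = 0")
        case True
        then show ?thesis
          using B0[of i] Lavg n unfolding p_def by simp
      next
        case False
        then have "(Hinvnorm H (D i))\<^sup>2 \<le> L i * B i"
          using Hinvnorm_sq_gradient_diff_le[OF deriv conv smooth, of i y s x z] L0[of i]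
          unfolding D_def B_def by (simp add: algebra_simps power2_eq_square)
        then show ?thesis
          using False L0[of i] Lavg n unfolding p_def by (simp add: field_simps)
      qed
    qed simp
    also have "\<dots> = n * Lavg * (2 * (n * Lavg) * (Hnorm H (x - y))\<^sup>2
        + 8 * ((\<Sum>i\<in>UNIV. bregman (f i) (g i) z x) + (\<Sum>i\<in>UNIV. bregman (f i) (g i) z s)))
        / (real b * n\<^sup>2)"
    proof -
      have "(\<Sum>i\<in>UNIV. B i) = 2 * (\<Sum>i\<in>UNIV. L i) * (Hnorm H (x - y))\<^sup>2
          + 8 * ((\<Sum>i\<in>UNIV. bregman (f i) (g i) z x) + (\<Sum>i\<in>UNIV. bregman (f i) (g i) z s))"
        unfolding B_def by (simp add: sum.distrib sum_distrib_left sum_distrib_right)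
      then show ?thesis
        using n unfolding Lavg_def by (simp flip: sum_distrib_left)
    qed
    also have "\<dots> = ?rhs"
      using n b by (simp add: field_simps power2_eq_square)
    finally show ?thesis .
  qed
qed

end

theorem lemma6:
  fixes f :: "'i::finite \<Rightarrow> real^'d \<Rightarrow> real"
    and g :: "'i \<Rightarrow> real^'d \<Rightarrow> real^'d"
    and h :: "real^'d \<Rightarrow> ereal"
    and H :: "real^'d^'d"
    and L :: "'i \<Rightarrow> real"
    and \<mu> :: real
    and b :: nat
    and xstar xk yk xs :: "real^'d"
  defines "n \<equiv> real CARD('i)"
  defines "Lavg \<equiv> (\<Sum>i\<in>UNIV. L i) / n"
  defines "fbar \<equiv> (\<lambda>x. (\<Sum>i\<in>UNIV. f i x) / n)"
  defines "gradf \<equiv> (\<lambda>x. (1 / n) *\<^sub>R (\<Sum>i\<in>UNIV. g i x))"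
  defines "F \<equiv> (\<lambda>x. ereal (fbar x) + h x)"
  defines "p \<equiv> (\<lambda>i. L i / (n * Lavg))"
  defines "v \<equiv> (\<lambda>I::nat \<Rightarrow> 'i. (1 / real b) *\<^sub>R
              (\<Sum>j<b. (1 / (n * p (I j))) *\<^sub>R (g (I j) yk - g (I j) xs)) + gradf xs)"
  assumes H: "sym_pos_def_mat H"
    and grad: "\<And>i x. (f i has_derivative (\<lambda>u. g i x \<bullet> u)) (at x)"
    and fconv: "\<And>i. convex_on UNIV (f i)"
    and smooth: "\<And>i x y. Hinvnorm H (g i x - g i y) \<le> L i * Hnorm H (x - y)"
    and mu: "\<mu> > 0"
    and strong: "\<And>x y. fbar y \<ge> fbar x + gradf x \<bullet> (y - x) + \<mu> / 2 * (Hnorm H (y - x))\<^sup>2"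
    and hproper: "proper_fun h"
    and hconv: "convex_ext h"
    and hlsc: "lsc_ext h"
    and hdom: "closed (edom h)"
    and xstar: "\<And>x. F xstar \<le> F x"
    and b: "b \<ge> 1"
  shows "ereal (\<Sum>I\<in>PiE {..<b} (\<lambda>_. UNIV). (\<Prod>j<b. p (I j)) * (Hinvnorm H (v I - gradf yk))\<^sup>2)
         \<le> ereal (2 * Lavg\<^sup>2 / real b * (Hnorm H (xk - yk))\<^sup>2)
           + ereal (8 * Lavg / real b) * ((F xk - F xstar) + (F xs - F xstar))"
proof -
  have n: "0 < n"
    unfolding n_def by simp
  have Lavg: "0 \<le> Lavg"
    using smoothness_const_nonneg[OF H smooth] n unfolding Lavg_def by (simp add: sum_nonneg)
  have bregman_fbar: "bregman fbar gradf x w = (\<Sum>i\<in>UNIV. bregman (f i) (g i) x w) / n" for x w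
    unfolding fbar_def gradf_def by (rule bregman_average)
  have gap: "ereal (bregman fbar gradf xstar z) \<le> F z - F xstar" for z
    unfolding F_def
  proof (rule bregman_le_objective_gap[OF H _ hproper hconv])
    fix w
    have "(\<Sum>i\<in>UNIV. bregman (f i) (g i) xstar w) / n \<le> (\<Sum>i\<in>UNIV. L i / 2 * (Hnorm H (w - xstar))\<^sup>2) / n"
      using bregman_le_Hnorm_sq[OF H grad smooth] n by (intro divide_right_mono sum_mono) auto
    then show "bregman fbar gradf xstar w \<le> Lavg / 2 * (Hnorm H (w - xstar))\<^sup>2"
      unfolding bregman_fbar Lavg_def by (simp add: sum_distrib_right flip: sum_divide_distrib)
  qed (use xstar in \<open>simp add: F_def\<close>)
  have "v I - gradf yk = (1 / real b) *\<^sub>R (\<Sum>j<b. (1 / (n * p (I j))) *\<^sub>R (g (I j) yk - g (I j) xs))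
      - (1 / n) *\<^sub>R (\<Sum>i\<in>UNIV. g i yk - g i xs)" for I
    unfolding v_def gradf_def by (simp add: sum_subtractf algebra_simps)
  then have "(\<Sum>I\<in>PiE {..<b} (\<lambda>_. UNIV). (\<Prod>j<b. p (I j)) * (Hinvnorm H (v I - gradf yk))\<^sup>2)
    \<le> 2 * Lavg\<^sup>2 / real b * (Hnorm H (xk - yk))\<^sup>2
      + 8 * Lavg / real b * (bregman fbar gradf xstar xk + bregman fbar gradf xstar xs)"
    using expectation_Hinvnorm_sq_variance_reduced_error_le[OF H, where f = f and g = g and L = L
        and y = yk and s = xs and x = xk and z = xstar, OF grad fconv smooth] b
    unfolding bregman_fbar p_def Lavg_def n_def by simp
  then show ?thesis
    using Lavg gap by (intro ereal_le_add_mult_add) auto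
qed

end
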